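(* Let $(S,+)$ be a commutative semigroup, let $A\subseteq S$ be a $\mathcal{CR}$-set in $(S,+)$, and let $l\in\mathbb{N}$. Then the set $$\{(a,b)\in S\times S:\ \{a,a+b,a+2b,\ldots,a+lb\}\subseteq A\}$$ is a $\mathcal{CR}$-set in the semigroup $(S\times S,+)$ (with coordinatewise addition).
   Context: For a commutative semigroup $(S,+)$ and $r,n\in\mathbb{N}$, let $S^{r\times n}$ denote the set of $r\times n$ matrices with entries in $S$. For $M=(M_{ij})\in S^{r\times n}$ and a non-empty $\alpha\subseteq\{1,\ldots,r\}$, write $M_{\alpha j}=\sum_{i\in\alpha}M_{ij}$. A subset $A\subseteq S$ is a $\mathcal{CR}$-set (combinatorially rich set) if for every $n\in\mathbb{N}$ there exists $r\in\mathbb{N}$ such that for every $M\in S^{r\times n}$ there exist a non-empty set $\alpha\subseteq\{1,\ldots,r\}$ and $s\in S$ with $s+M_{\alpha j}\in A$ for all $j\in\{1,\ldots,n\}$. For $k\in\mathbb{N}$ and $b\in S$, $kb$ denotes $b+\cdots+b$ ($k$ times). *)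

theory Defs
  imports Main "HOL-Library.Product_Plus"
begin

text \<open>Matrices in S^(r x n) are represented as functions M :: nat => nat => 'a,
 of which only the entries M i j with i in {1..r}, j in {1..n} matter.
 M_{alpha j} is the sum over i in alpha of M i j.\<close>

text \<open>Sum of f over a finite non-empty index set of naturals in a semigroup
 (no neutral element), taken in increasing order (order irrelevant by commutativity).\<close>
definition ssum :: "nat set \<Rightarrow> (nat \<Rightarrow> 'a::ab_semigroup_add) \<Rightarrow> 'a" where
  "ssum \<alpha> f = (let xs = sorted_list_of_set \<alpha> in
                  foldl (\<lambda>acc i. acc + f i) (f (hd xs)) (tl xs))"

definition CR_set :: "'a::ab_semigroup_add set \<Rightarrow> bool" where
  "CR_set A \<longleftrightarrow>
     (\<forall>n::nat \<ge> 1. \<exists>r::nat \<ge> 1. \<forall>M :: nat \<Rightarrow> nat \<Rightarrow> 'a.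
        \<exists>\<alpha> s. \<alpha> \<subseteq> {1..r} \<and> \<alpha> \<noteq> {} \<and>
          (\<forall>j\<in>{1..n}. s + ssum \<alpha> (\<lambda>i. M i j) \<in> A))"

fun smul :: "nat \<Rightarrow> 'a::plus \<Rightarrow> 'a" where
  "smul 0 b = b"   (* unused convention; only k >= 1 is used *)
| "smul (Suc 0) b = b"
| "smul (Suc (Suc k)) b = smul (Suc k) b + b"

end

theory Submission
  imports Defs
begin

text \<open>Index the columns by pairs (j, k) with j \<le> n, k \<le> l, and let column (j, k) be
  a_j + k b_j, where (a_j, b_j) is column j of the given matrix over S \<times> S. A witness (\<alpha>, t) of
  the CR-property of A for this matrix gives the witness (\<alpha>, (t, s)) for the original one.
  As S need not have a neutral element, s cannot be 0: an arbitrary element x is added to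
  every b-entry, and s is the sum of |\<alpha>| copies of x.\<close>

lemma foldl_add_hom:
  assumes "\<And>x y. h (x + y) = h x + h y"
  shows "h (foldl (\<lambda>acc i. acc + f i) u xs) = foldl (\<lambda>acc i. acc + h (f i)) (h u) xs"
  using assms by (induction xs arbitrary: u) simp_all

lemma ssum_add_hom:
  assumes "\<And>x y. h (x + y) = h x + h y"
  shows "h (ssum \<alpha> f) = ssum \<alpha> (\<lambda>i. h (f i))"
  unfolding ssum_def Let_def using assms by (rule foldl_add_hom)

lemma foldl_add_distrib:
  "foldl (\<lambda>acc i. acc + (f i + g i)) (u + v) xs
   = foldl (\<lambda>acc i. acc + f i) u xs + foldl (\<lambda>acc i. acc + g i) v xs"
  for f g :: "nat \<Rightarrow> 'a::ab_semigroup_add"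
proof (induction xs arbitrary: u v)
  case (Cons a xs)
  have "u + v + (f a + g a) = (u + f a) + (v + g a)" by (simp add: ac_simps)
  then show ?case using Cons by simp
qed simp

lemma ssum_add: "ssum \<alpha> (\<lambda>i. f i + g i) = ssum \<alpha> f + ssum \<alpha> g"
  unfolding ssum_def Let_def by (rule foldl_add_distrib)

lemma smul_add: "smul k (x + y) = smul k x + smul k (y::'a::ab_semigroup_add)"
  by (induction k x rule: smul.induct) (simp_all add: ac_simps)

lemma ssum_smul: "ssum \<alpha> (\<lambda>i. smul k (f i)) = smul k (ssum \<alpha> f)"
  by (rule ssum_add_hom[symmetric]) (rule smul_add)

lemma ssum_prod: "ssum \<alpha> f = (ssum \<alpha> (\<lambda>i. fst (f i)), ssum \<alpha> (\<lambda>i. snd (f i)))"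
  by (simp add: prod_eq_iff ssum_add_hom)

lemma CR_set_finite_columns:
  assumes "CR_set A" and "finite J"
  obtains r where "r \<ge> 1"
    and "\<And>N :: nat \<Rightarrow> 'b \<Rightarrow> 'a::ab_semigroup_add. \<exists>\<alpha> s. \<alpha> \<subseteq> {1..r} \<and> \<alpha> \<noteq> {} \<and>
           (\<forall>c\<in>J. s + ssum \<alpha> (\<lambda>i. N i c) \<in> A)"
proof -
  obtain h where h: "bij_betw h {1..card J} J"
    using ex_bij_betw_nat_finite_1[OF \<open>finite J\<close>] by blast
  obtain r where "r \<ge> 1" and R: "\<And>N :: nat \<Rightarrow> nat \<Rightarrow> 'a. \<exists>\<alpha> s. \<alpha> \<subseteq> {1..r} \<and> \<alpha> \<noteq> {} \<and>
      (\<forall>j\<in>{1..Suc (card J)}. s + ssum \<alpha> (\<lambda>i. N i j) \<in> A)"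
    using \<open>CR_set A\<close>[unfolded CR_set_def, rule_format, of "Suc (card J)"] by auto
  show thesis
  proof (rule that[OF \<open>r \<ge> 1\<close>])
    fix N :: "nat \<Rightarrow> 'b \<Rightarrow> 'a"
    obtain \<alpha> s where "\<alpha> \<subseteq> {1..r}" "\<alpha> \<noteq> {}"
      and cols: "\<forall>j\<in>{1..Suc (card J)}. s + ssum \<alpha> (\<lambda>i. N i (h j)) \<in> A"
      using R[of "\<lambda>i j. N i (h j)"] by blast
    have "\<forall>c\<in>J. s + ssum \<alpha> (\<lambda>i. N i c) \<in> A"
    proof
      fix c assume "c \<in> J"
      then obtain j where "j \<in> {1..card J}" "c = h j"
        using bij_betw_imp_surj_on[OF h] by blast
      then show "s + ssum \<alpha> (\<lambda>i. N i c) \<in> A" using cols by auto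
    qed
    with \<open>\<alpha> \<subseteq> {1..r}\<close> \<open>\<alpha> \<noteq> {}\<close> show "\<exists>\<alpha> s. \<alpha> \<subseteq> {1..r} \<and> \<alpha> \<noteq> {} \<and>
        (\<forall>c\<in>J. s + ssum \<alpha> (\<lambda>i. N i c) \<in> A)" by blast
  qed
qed

definition progression_matrix ::
    "(nat \<Rightarrow> nat \<Rightarrow> 'a \<times> 'a) \<Rightarrow> 'a \<Rightarrow> nat \<Rightarrow> nat \<times> nat \<Rightarrow> 'a::ab_semigroup_add" where
  "progression_matrix M x i c = (case c of (j, k) \<Rightarrow>
     if k = 0 then fst (M i j) else fst (M i j) + smul k (snd (M i j) + x))"

lemma ssum_progression_matrix:
  "ssum \<alpha> (\<lambda>i. progression_matrix M x i (j, k)) =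
     (if k = 0 then ssum \<alpha> (\<lambda>i. fst (M i j))
      else ssum \<alpha> (\<lambda>i. fst (M i j)) + smul k (ssum \<alpha> (\<lambda>_. x) + ssum \<alpha> (\<lambda>i. snd (M i j))))"
  by (simp add: progression_matrix_def ssum_add ssum_smul ac_simps)

lemma progression_matrix_witness:
  assumes cols: "\<forall>c\<in>{1..n} \<times> {0..l}. t + ssum \<alpha> (\<lambda>i. progression_matrix M x i c) \<in> A"
    and "j \<in> {1..n}"
  shows "(t, ssum \<alpha> (\<lambda>_. x)) + ssum \<alpha> (\<lambda>i. M i j)
           \<in> {(a, b). a \<in> A \<and> (\<forall>k\<in>{1..l}. a + smul k b \<in> A)}"
proof -
  have "t + ssum \<alpha> (\<lambda>i. fst (M i j)) \<in> A"
    using cols \<open>j \<in> {1..n}\<close> ssum_progression_matrix[of \<alpha> M x j 0] by force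
  moreover have "t + ssum \<alpha> (\<lambda>i. fst (M i j))
      + smul k (ssum \<alpha> (\<lambda>_. x) + ssum \<alpha> (\<lambda>i. snd (M i j))) \<in> A" if "k \<in> {1..l}" for k
    using cols \<open>j \<in> {1..n}\<close> that ssum_progression_matrix[of \<alpha> M x j k]
    by (force simp: add.assoc)
  ultimately show ?thesis
    by (subst ssum_prod) simp
qed

theorem theorem8:
  fixes A :: "'a::ab_semigroup_add set" and l :: nat
  assumes "CR_set A" and "l \<ge> 1"
  shows "CR_set ({(a, b). a \<in> A \<and> (\<forall>k\<in>{1..l}. a + smul k b \<in> A)} :: ('a \<times> 'a) set)"
  unfolding CR_set_def
proof (intro allI impI)
  fix n :: nat
  obtain r where "r \<ge> 1" and R: "\<And>N :: nat \<Rightarrow> nat \<times> nat \<Rightarrow> 'a. \<exists>\<alpha> t. \<alpha> \<subseteq> {1..r} \<and> \<alpha> \<noteq> {} \<and>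
      (\<forall>c\<in>{1..n} \<times> {0..l}. t + ssum \<alpha> (\<lambda>i. N i c) \<in> A)"
    using CR_set_finite_columns[OF assms(1), of "{1..n} \<times> {0..l}"] by auto
  show "\<exists>r\<ge>1. \<forall>M :: nat \<Rightarrow> nat \<Rightarrow> 'a \<times> 'a. \<exists>\<alpha> s. \<alpha> \<subseteq> {1..r} \<and> \<alpha> \<noteq> {} \<and>
          (\<forall>j\<in>{1..n}. s + ssum \<alpha> (\<lambda>i. M i j) \<in> {(a, b). a \<in> A \<and> (\<forall>k\<in>{1..l}. a + smul k b \<in> A)})"
  proof (rule exI[of _ r], intro conjI allI \<open>r \<ge> 1\<close>)
    fix M :: "nat \<Rightarrow> nat \<Rightarrow> 'a \<times> 'a"
    obtain \<alpha> t where "\<alpha> \<subseteq> {1..r}" "\<alpha> \<noteq> {}"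
      and cols: "\<forall>c\<in>{1..n} \<times> {0..l}. t + ssum \<alpha> (\<lambda>i. progression_matrix M undefined i c) \<in> A"
      using R[of "progression_matrix M undefined"] by blast
    show "\<exists>\<alpha> s. \<alpha> \<subseteq> {1..r} \<and> \<alpha> \<noteq> {} \<and>
        (\<forall>j\<in>{1..n}. s + ssum \<alpha> (\<lambda>i. M i j) \<in> {(a, b). a \<in> A \<and> (\<forall>k\<in>{1..l}. a + smul k b \<in> A)})"
    proof (rule exI[of _ \<alpha>], rule exI[of _ "(t, ssum \<alpha> (\<lambda>_. undefined))"], intro conjI ballI)
      show "\<alpha> \<subseteq> {1..r}" "\<alpha> \<noteq> {}" by fact+
    qed (rule progression_matrix_witness[OF cols])
  qed
qed

end
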